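(* Assume the standing hypotheses (H). There is a nonnegative $K_4\in L^2_{\mathfrak P}$ such that for every $(t,\mathbf x,y)\in\mathbf D\times\mathbb R$, $\boldsymbol\upsilon\in\mathbb R^2$, $\boldsymbol\zeta\in\mathbf Z$ and $\psi>0$, $$H^\psi_4(t,\mathbf x,y;\boldsymbol\upsilon,\boldsymbol\zeta)\ge U''(y)K_4(t,\mathbf x)\psi^2.$$
   Context: Setting. Fix $T>0$, $S_0>0$, $\Sigma_0>0$, $A_0\in\mathbb R$. $\Omega$: continuous paths $\omega=(\omega^S,\omega^\Sigma,\omega^A):[0,T]\to\mathbb R^3$ with $\omega_0=(S_0,\Sigma_0,A_0)$ (uniform topology, Borel $\sigma$-algebra $\mathcal F$); $S,\Sigma,A$ coordinate processes, $\mathbb F$ their raw filtration, $M_t=\sup_{u\le t}S_u$, $\mathbf X_t=(S_t,A_t,M_t,\Sigma_t)$. $\mathbf G=\mathbb R_+\times\mathbb R\times\mathbb R_+$, $\mathbf D^0=(0,T)\times\mathbf G\times\mathbb R_+$ (points $(t,\mathbf x)$, $\mathbf x=(S,A,M,\Sigma)$); $0<\underline\Sigma<\Sigma_0<\overline\Sigma$, $\mathbf D=(0,T)\times\mathbf G\times[\underline\Sigma,\overline\Sigma]$. $\|\cdot\|$ Euclidean norm, $\mathbf e_4$ fourth unit vector, $x^-=\max(-x,0)$. Call: $\mathcal C(t,S,\Sigma)$ with $\mathcal C_t+\frac12\Sigma^2S^2\mathcal C_{SS}=0$, $\mathcal C(T_{\mathsf C},S,\Sigma)=\mathsf C(S)$.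 $b^{\mathcal C}(t,\mathbf x;\boldsymbol\zeta)=\nu\mathcal C_\Sigma+\frac12S^2\mathcal C_{SS}(\sigma^2-\Sigma^2)+\sigma\eta S\mathcal C_{S\Sigma}+\frac12(\eta^2+\xi)\mathcal C_{\Sigma\Sigma}$ for $\boldsymbol\zeta=(\nu,\sigma,\eta,\xi)$. Models: $\mathfrak P^{00}$ = probability measures $P$ on $(\Omega,\mathcal F)$ with progressively measurable $\boldsymbol\zeta^P=(\nu^P,\sigma^P,\eta^P,\xi^P)$ such that $S$, $\Sigma-\int_0^\cdot\nu^P_tdt$ are continuous local $P$-martingales with $d\langle S\rangle_t=S_t^2(\sigma^P_t)^2dt$, $d\langle\Sigma\rangle_t=((\eta^P_t)^2+\xi^P_t)dt$, $d\langle S,\Sigma\rangle_t=S_t\sigma^P_t\eta^P_tdt$, $S,\Sigma>0$, $\xi^P\ge0$, $b^{\mathcal C}(t,\mathbf X_t;\boldsymbol\zeta^P_t)=0$ $dt\times P$-a.e.; for Borel $\alpha,\beta,\gamma,\delta:[0,T]\times\mathbb R^3\to\mathbb R$, $\mathfrak P^0$ = those $P$ with $dA_t=(\alpha+\frac12(\sigma^P_t)^2\beta)dt+\gamma dS_t+\delta dM_t$. $\boldsymbol\zeta^0(\Sigma)=(0,\Sigma,0,0)^\top$; reference model: $\boldsymbol\zeta^P_t=\boldsymbol\zeta^0(\Sigma_t)$ a.e. Non-traded option: $\mathcal V(\cdot,\Sigma)$ solves $\mathcal V_t+(\alpha+\frac12\beta\Sigma^2)\mathcal V_A+\frac12\Sigma^2S^2(\mathcal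 V_{SS}+2\gamma\mathcal V_{SA}+\gamma^2\mathcal V_{AA})=0$ on $(0,T)\times\mathbf G$, $\delta\mathcal V_A+\mathcal V_M=0$ on $\{S\ge M\}$, $\mathcal V(T,\cdot,\Sigma)=\mathsf V$. $\Delta=\mathcal V_S+\gamma\mathcal V_A$, $\Gamma=\mathcal V_{SS}+2\gamma\mathcal V_{SA}+\gamma^2\mathcal V_{AA}$, $\frac{\partial\Delta}{\partial\Sigma}:=\mathcal V_{S\Sigma}+\gamma\mathcal V_{A\Sigma}$. P&L: $V_t=\mathcal V(t,\mathbf X_t)$, $C_t=\mathcal C(t,S_t,\Sigma_t)$; strategies $\boldsymbol\upsilon=(\theta,\phi)$ real locally bounded progressive; $Y^{\boldsymbol\upsilon,P}_t=Y_0+V_0+\int_0^t\theta dS+\int_0^t\phi dC-V_t$. Preferences: $\Psi=\mathrm{diag}(\psi_\nu,\psi_\sigma,\psi_\eta,\psi_\xi)$, positive; a utility $U$, strategy set $\mathfrak Y$, model set $\mathfrak P\subset\mathfrak P^0$. Candidate control: $\mathbf c=(\mathcal C_\Sigma,\Sigma S^2\mathcal C_{SS},\Sigma S\mathcal C_{S\Sigma},\frac12\mathcal C_{\Sigma\Sigma})^\top$, $\mathbf v=(\mathcal V_\Sigma,\Sigma(\beta\mathcal V_A+S^2\Gamma),\Sigma S\frac{\partial\Delta}{\partial\Sigma},\frac12\mathcal V_{\Sigma\Sigma})^\top$; $\lambda=\frac{\mathbf c^\top\Psi\mathbf v}{\mathbf c^\top\Psi\mathbf c}$ if $\mathcal V_{\Sigma\Sigma}-\frac{\mathbf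 c^\top\Psi\mathbf v}{\mathbf c^\top\Psi\mathbf c}\mathcal C_{\Sigma\Sigma}\ge0$, else $\lambda=\frac{\mathbf c^\top\Psi\mathbf v-\frac14\mathcal C_{\Sigma\Sigma}\mathcal V_{\Sigma\Sigma}\psi_\xi}{\mathbf c^\top\Psi\mathbf c-\frac14\mathcal C_{\Sigma\Sigma}^2\psi_\xi}$; $\mu=\frac12(\mathcal V_{\Sigma\Sigma}-\lambda\mathcal C_{\Sigma\Sigma})^-$; $\widetilde{\boldsymbol\zeta}=\Psi(\mathbf v-\lambda\mathbf c+\mu\mathbf e_4)$; $\boldsymbol\zeta^\psi=\boldsymbol\zeta^0(\Sigma)+\widetilde{\boldsymbol\zeta}\mathbf 1_{\{\underline\Sigma<\Sigma<\overline\Sigma\}}\psi$; $\widetilde g=\mathbf v^\top\widetilde{\boldsymbol\zeta}$. Cash-equivalent PDE: for $\Sigma\in[\underline\Sigma,\overline\Sigma]$, $\widetilde w_t+(\alpha+\frac12\beta\Sigma^2)\widetilde w_A+\frac12\Sigma^2S^2(\widetilde w_{SS}+2\gamma\widetilde w_{SA}+\gamma^2\widetilde w_{AA})+\frac12\widetilde g(\cdot,\Sigma)=0$ on $(0,T)\times\mathbf G$, $\delta\widetilde w_A+\widetilde w_M=0$ on $\{S\ge M\}$, $\widetilde w(T,\cdot,\Sigma)=0$. $L^p_{\mathfrak P}$: Borel $K$ on $\mathbf D^0$ with $\sup_{P\in\mathfrak P}E^P[\int_0^T|K(t,\mathbf X_t)|^pdt]^{1/p}<\infty$. Candidate asymptotic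 model family: $(P^\psi)_{\psi\in(0,\psi_0)}\subset\mathfrak P$, $\psi_0\in(0,1)$, with $K_0\in L^4_{\mathfrak P}$ and $\|\boldsymbol\zeta^{P^\psi}_t-\boldsymbol\zeta^\psi(t,\mathbf X_t)\|\le K_0(t,\mathbf X_t)\psi^2$ $dt\times P^\psi$-a.e. Assumption (A): (a) $\exists K_{\mathfrak Y}$: $Y^{\boldsymbol\upsilon,P}>-K_{\mathfrak Y}$ $dt\times P$-a.e. for all $\boldsymbol\upsilon\in\mathfrak Y$, $P\in\mathfrak P$; (b) $\mathfrak P$ contains a candidate asymptotic model family and a reference model, and constants $\underline\nu<0<\overline\nu$, $0<\underline\sigma<\underline\Sigma$, $\overline\Sigma<\overline\sigma$, $\underline\eta<0<\overline\eta$, $\overline\xi>0$ bound $\nu^P,\sigma^P,\eta^P,\xi^P,\Sigma$ in $[\underline\nu,\overline\nu],[\underline\sigma,\overline\sigma],[\underline\eta,\overline\eta],[0,\overline\xi],[\underline\Sigma,\overline\Sigma]$ $dt\times P$-a.e. for all $P\in\mathfrak P$; (c) $T_{\mathsf C}\ge T$, $\mathcal C\in C^{1,2,2}((0,T_{\mathsf C})\times\mathbb R_+^2)\cap C([0,T_{\mathsf C}]\times\overline{\mathbb R}_+^2)$ solves the call PDE classically for $\Sigma\in[\underline\Sigma,\overline\Sigma]$, $\mathcal C_\Sigma\ne0$ and $|\mathcal C_{\Sigma\Sigma}|\le K_{\mathcal C}(|\mathcal C_\Sigma|+|S^2\mathcal C_{SS}|+|S\mathcal C_{S\Sigma}|)$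 on $(0,T)\times\mathbb R_+\times[\underline\Sigma,\overline\Sigma]$ with $K_{\mathcal C}\in L^2_{\mathfrak P}$; (d) $\mathcal V\in C^{1,2,2,1,2}(\mathbf D^0)\cap C(\overline{\mathbf D^0})$ solves the $\mathcal V$-PDE classically for $\Sigma\in[\underline\Sigma,\overline\Sigma]$, $|\mathcal V_\Sigma|,|\beta\mathcal V_A+S^2\Gamma|,|S\frac{\partial\Delta}{\partial\Sigma}|,|\mathcal V_{\Sigma\Sigma}|\le K_{\mathcal V}$ on $\mathbf D$; (e) $\widetilde w\in C^{1,2,2,1,2}(\mathbf D^0)\cap C(\overline{\mathbf D^0})$ solves the cash-equivalent PDE classically for $\Sigma\in[\underline\Sigma,\overline\Sigma]$, $0\le\widetilde w\le K_{\widetilde w}$ on $\mathbf D$, and $\widetilde w_\Sigma,S(\widetilde w_S+\gamma\widetilde w_A),\beta\widetilde w_A+S^2(\widetilde w_{SS}+2\gamma\widetilde w_{SA}+\gamma^2\widetilde w_{AA}),S(\widetilde w_{S\Sigma}+\gamma\widetilde w_{A\Sigma}),\widetilde w_{\Sigma\Sigma}\in L^4_{\mathfrak P}$; (f) $U\in C^3(\mathbb R)$, $U'>0$, $U''<0$, $-U''/U'$ nonincreasing. Additional notation. $\mathbf Z=[\underline\nu,\overline\nu]\times[\underline\sigma,\overline\sigma]\times[\underline\eta,\overline\eta]\times[0,\overline\xi]$. $w^\psi(t,\mathbf x,y)=U(y)-U'(y)\widetilde w(t,\mathbf x)\psi$, so $w^\psi_{YY}=U''(y)-U'''(y)\widetilde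 w(t,\mathbf x)\psi$. For $\boldsymbol\upsilon=(\theta,\phi)\in\mathbb R^2$ and $\boldsymbol\zeta=(\nu,\sigma,\eta,\xi)$, let $\mathbf z=\big(\sigma S(\theta-(\Delta-\phi\mathcal C_S)),\ \phi\mathcal C_\Sigma-\mathcal V_\Sigma\big)^\top$, $Q=\begin{pmatrix}1&\eta\\\eta&\eta^2+\xi\end{pmatrix}$, $\widetilde{\mathbf w}=\big(\sigma S(\widetilde w_S+\gamma\widetilde w_A),\ \widetilde w_\Sigma\big)^\top$ (all at $(t,\mathbf x)$), and $H^\psi_4(t,\mathbf x,y;\boldsymbol\upsilon,\boldsymbol\zeta)=-\frac{w^\psi_{YY}(t,\mathbf x,y)}2\mathbf z^\top Q\mathbf z+\psi U''(y)\widetilde{\mathbf w}^\top Q\mathbf z$. Delta-vega hedge $\boldsymbol\upsilon^\star_t=(\Delta-\frac{\mathcal V_\Sigma}{\mathcal C_\Sigma}\mathcal C_S,\frac{\mathcal V_\Sigma}{\mathcal C_\Sigma})(t,\mathbf X_t)$. Standing hypotheses (H): Assumption (A) holds, $\boldsymbol\upsilon^\star\in\mathfrak Y$, and $(P^\psi)_{\psi\in(0,\psi_0)}\subset\mathfrak P$ is a candidate asymptotic model family. *)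

theory Defs
  imports "HOL-Probability.Probability"
begin

text \<open>A path is omega = (omega^S, omega^Sigma, omega^A) : [0,T] -> R^3; we represent
 it as a total function, extended constantly outside [0,T].\<close>

type_synonym path = "real \<Rightarrow> real \<times> real \<times> real"

definition Omega :: "real \<Rightarrow> real \<Rightarrow> real \<Rightarrow> real \<Rightarrow> path set" where
  "Omega T S0 Sig0 A0 = {\<omega>. continuous_on {0..T} \<omega> \<and> \<omega> 0 = (S0, Sig0, A0)
      \<and> (\<forall>t. \<omega> t = \<omega> (max 0 (min T t)))}"

definition sup_dist :: "real \<Rightarrow> path \<Rightarrow> path \<Rightarrow> real" where
  "sup_dist T \<omega> \<omega>' = (SUP t\<in>{0..T}. dist (\<omega> t) (\<omega>' t))"

definition unif_open :: "real \<Rightarrow> path set \<Rightarrow> path set set" where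
  "unif_open T \<Omega> = {U. U \<subseteq> \<Omega> \<and> (\<forall>\<omega>\<in>U. \<exists>r>0. \<forall>\<omega>'\<in>\<Omega>. sup_dist T \<omega> \<omega>' < r \<longrightarrow> \<omega>' \<in> U)}"

definition path_events :: "real \<Rightarrow> path set \<Rightarrow> path set set" where
  "path_events T \<Omega> = sigma_sets \<Omega> (unif_open T \<Omega>)"

definition S_of :: "path \<Rightarrow> real \<Rightarrow> real" where "S_of \<omega> t = fst (\<omega> t)"
definition Sig_of :: "path \<Rightarrow> real \<Rightarrow> real" where "Sig_of \<omega> t = fst (snd (\<omega> t))"
definition A_of :: "path \<Rightarrow> real \<Rightarrow> real" where "A_of \<omega> t = snd (snd (\<omega> t))"
definition M_of :: "path \<Rightarrow> real \<Rightarrow> real" where "M_of \<omega> t = (SUP u\<in>{0..t}. S_of \<omega> u)"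

definition X :: "path \<Rightarrow> real \<Rightarrow> real \<times> real \<times> real \<times> real" where
  "X \<omega> t = (S_of \<omega> t, A_of \<omega> t, M_of \<omega> t, Sig_of \<omega> t)"

text \<open>Points (t,S,A,M,Sigma); R_+ is read as (0,infinity).\<close>
definition D0 :: "real \<Rightarrow> (real \<times> real \<times> real \<times> real \<times> real) set" where
  "D0 T = {(t,S,A,M,Sg). 0 < t \<and> t < T \<and> 0 < S \<and> 0 < M \<and> 0 < Sg}"

definition DD :: "real \<Rightarrow> real \<Rightarrow> real \<Rightarrow> (real \<times> real \<times> real \<times> real \<times> real) set" where
  "DD T Sl Sh = {(t,S,A,M,Sg). 0 < t \<and> t < T \<and> 0 < S \<and> 0 < M \<and> Sl \<le> Sg \<and> Sg \<le> Sh}"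

definition Lp :: "real \<Rightarrow> real \<Rightarrow> path measure set \<Rightarrow> (real \<Rightarrow> real \<times> real \<times> real \<times> real \<Rightarrow> real) \<Rightarrow> bool" where
  "Lp p T Ps K \<longleftrightarrow>
     (\<lambda>(t,x). K t x) \<in> borel_measurable (restrict_space borel (D0 T)) \<and>
     (\<exists>B::ennreal. B < \<infinity> \<and>
        (\<forall>P\<in>Ps. (\<integral>\<^sup>+\<omega>. (\<integral>\<^sup>+t\<in>{0..T}. ennreal (\<bar>K t (X \<omega> t)\<bar> powr p) \<partial>lborel) \<partial>P) \<le> B))"

type_synonym fun5 = "real \<Rightarrow> real \<Rightarrow> real \<Rightarrow> real \<Rightarrow> real \<Rightarrow> real"
type_synonym fun3 = "real \<Rightarrow> real \<Rightarrow> real \<Rightarrow> real"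

definition pt :: "fun5 \<Rightarrow> fun5" where "pt f = (\<lambda>t S A M Sg. deriv (\<lambda>u. f u S A M Sg) t)"
definition pS :: "fun5 \<Rightarrow> fun5" where "pS f = (\<lambda>t S A M Sg. deriv (\<lambda>u. f t u A M Sg) S)"
definition pA :: "fun5 \<Rightarrow> fun5" where "pA f = (\<lambda>t S A M Sg. deriv (\<lambda>u. f t S u M Sg) A)"
definition pM :: "fun5 \<Rightarrow> fun5" where "pM f = (\<lambda>t S A M Sg. deriv (\<lambda>u. f t S A u Sg) M)"
definition pSig :: "fun5 \<Rightarrow> fun5" where "pSig f = (\<lambda>t S A M Sg. deriv (\<lambda>u. f t S A M u) Sg)"

definition cont5 :: "fun5 \<Rightarrow> (real \<times> real \<times> real \<times> real \<times> real) set \<Rightarrow> bool" where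
  "cont5 f D \<longleftrightarrow> continuous_on D (\<lambda>(t,S,A,M,Sg). f t S A M Sg)"

definition diff_t :: "fun5 \<Rightarrow> (real \<times> real \<times> real \<times> real \<times> real) set \<Rightarrow> bool" where
  "diff_t f D \<longleftrightarrow> (\<forall>(t,S,A,M,Sg)\<in>D. (\<lambda>u. f u S A M Sg) differentiable (at t))"
definition diff_S :: "fun5 \<Rightarrow> (real \<times> real \<times> real \<times> real \<times> real) set \<Rightarrow> bool" where
  "diff_S f D \<longleftrightarrow> (\<forall>(t,S,A,M,Sg)\<in>D. (\<lambda>u. f t u A M Sg) differentiable (at S))"
definition diff_A :: "fun5 \<Rightarrow> (real \<times> real \<times> real \<times> real \<times> real) set \<Rightarrow> bool" where
  "diff_A f D \<longleftrightarrow> (\<forall>(t,S,A,M,Sg)\<in>D. (\<lambda>u. f t S u M Sg) differentiable (at A))"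
definition diff_M :: "fun5 \<Rightarrow> (real \<times> real \<times> real \<times> real \<times> real) set \<Rightarrow> bool" where
  "diff_M f D \<longleftrightarrow> (\<forall>(t,S,A,M,Sg)\<in>D. (\<lambda>u. f t S A u Sg) differentiable (at M))"
definition diff_Sig :: "fun5 \<Rightarrow> (real \<times> real \<times> real \<times> real \<times> real) set \<Rightarrow> bool" where
  "diff_Sig f D \<longleftrightarrow> (\<forall>(t,S,A,M,Sg)\<in>D. (\<lambda>u. f t S A M u) differentiable (at Sg))"

text \<open>C^{1,2,2,1,2}(D): continuous partials of order 1 in t and M, and of order up to 2
  (including mixed ones) in (S, A, Sigma).\<close>
definition C12212 :: "fun5 \<Rightarrow> (real \<times> real \<times> real \<times> real \<times> real) set \<Rightarrow> bool" where
  "C12212 f D \<longleftrightarrow> cont5 f D \<and> diff_t f D \<and> diff_S f D \<and> diff_A f D \<and> diff_M f D \<and> diff_Sig f D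
     \<and> cont5 (pt f) D \<and> cont5 (pM f) D
     \<and> (\<forall>g\<in>{pS f, pA f, pSig f}. cont5 g D \<and> diff_S g D \<and> diff_A g D \<and> diff_Sig g D
          \<and> cont5 (pS g) D \<and> cont5 (pA g) D \<and> cont5 (pSig g) D)"

definition ct :: "fun3 \<Rightarrow> fun3" where "ct f = (\<lambda>t S Sg. deriv (\<lambda>u. f u S Sg) t)"
definition cS :: "fun3 \<Rightarrow> fun3" where "cS f = (\<lambda>t S Sg. deriv (\<lambda>u. f t u Sg) S)"
definition cSig :: "fun3 \<Rightarrow> fun3" where "cSig f = (\<lambda>t S Sg. deriv (\<lambda>u. f t S u) Sg)"

definition cont3 :: "fun3 \<Rightarrow> (real \<times> real \<times> real) set \<Rightarrow> bool" where
  "cont3 f D \<longleftrightarrow> continuous_on D (\<lambda>(t,S,Sg). f t S Sg)"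

text \<open>C^{1,2,2}(D): continuous partials of order 1 in t and up to 2 in (S, Sigma).\<close>
definition C122 :: "fun3 \<Rightarrow> (real \<times> real \<times> real) set \<Rightarrow> bool" where
  "C122 f D \<longleftrightarrow> cont3 f D
     \<and> (\<forall>(t,S,Sg)\<in>D. (\<lambda>u. f u S Sg) differentiable (at t) \<and> (\<lambda>u. f t u Sg) differentiable (at S)
            \<and> (\<lambda>u. f t S u) differentiable (at Sg))
     \<and> cont3 (ct f) D
     \<and> (\<forall>g\<in>{cS f, cSig f}. cont3 g D
          \<and> (\<forall>(t,S,Sg)\<in>D. (\<lambda>u. g t u Sg) differentiable (at S) \<and> (\<lambda>u. g t S u) differentiable (at Sg))
          \<and> cont3 (cS g) D \<and> cont3 (cSig g) D)"

type_synonym coef = "real \<Rightarrow> real \<Rightarrow> real \<Rightarrow> real \<Rightarrow> real"  \<comment> \<open>functions of (t,S,A,M)\<close>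
type_synonym vec4 = "real \<times> real \<times> real \<times> real"

definition Delta :: "fun5 \<Rightarrow> coef \<Rightarrow> fun5" where
  "Delta V \<gamma> = (\<lambda>t S A M Sg. pS V t S A M Sg + \<gamma> t S A M * pA V t S A M Sg)"

definition Gam :: "fun5 \<Rightarrow> coef \<Rightarrow> fun5" where
  "Gam V \<gamma> = (\<lambda>t S A M Sg. pS (pS V) t S A M Sg + 2 * \<gamma> t S A M * pA (pS V) t S A M Sg
      + (\<gamma> t S A M)\<^sup>2 * pA (pA V) t S A M Sg)"

definition dDelta_dSig :: "fun5 \<Rightarrow> coef \<Rightarrow> fun5" where
  "dDelta_dSig V \<gamma> = (\<lambda>t S A M Sg. pSig (pS V) t S A M Sg + \<gamma> t S A M * pSig (pA V) t S A M Sg)"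

definition cvec :: "fun3 \<Rightarrow> real \<Rightarrow> real \<Rightarrow> real \<Rightarrow> vec4" where
  "cvec C t S Sg = (cSig C t S Sg, Sg * S\<^sup>2 * cS (cS C) t S Sg, Sg * S * cSig (cS C) t S Sg,
      cSig (cSig C) t S Sg / 2)"

definition vvec :: "fun5 \<Rightarrow> coef \<Rightarrow> coef \<Rightarrow> real \<Rightarrow> real \<Rightarrow> real \<Rightarrow> real \<Rightarrow> real \<Rightarrow> vec4" where
  "vvec V \<beta> \<gamma> t S A M Sg = (pSig V t S A M Sg,
      Sg * (\<beta> t S A M * pA V t S A M Sg + S\<^sup>2 * Gam V \<gamma> t S A M Sg),
      Sg * S * dDelta_dSig V \<gamma> t S A M Sg,
      pSig (pSig V) t S A M Sg / 2)"

text \<open>Psi = diag(psi_nu, psi_sigma, psi_eta, psi_xi), stored as a 4-tuple.\<close>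
fun ipPsi :: "vec4 \<Rightarrow> vec4 \<Rightarrow> vec4 \<Rightarrow> real" where
  "ipPsi (p1,p2,p3,p4) (a1,a2,a3,a4) (b1,b2,b3,b4) = p1*a1*b1 + p2*a2*b2 + p3*a3*b3 + p4*a4*b4"

fun pmul :: "vec4 \<Rightarrow> vec4 \<Rightarrow> vec4" where
  "pmul (p1,p2,p3,p4) (a1,a2,a3,a4) = (p1*a1, p2*a2, p3*a3, p4*a4)"

fun dot4 :: "vec4 \<Rightarrow> vec4 \<Rightarrow> real" where
  "dot4 (a1,a2,a3,a4) (b1,b2,b3,b4) = a1*b1 + a2*b2 + a3*b3 + a4*b4"

definition psi_xi :: "vec4 \<Rightarrow> real" where "psi_xi Psi = snd (snd (snd Psi))"

definition lam :: "vec4 \<Rightarrow> vec4 \<Rightarrow> vec4 \<Rightarrow> real \<Rightarrow> real \<Rightarrow> real" where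
  "lam Psi c v CSS VSS =
     (if VSS - (ipPsi Psi c v / ipPsi Psi c c) * CSS \<ge> 0 then ipPsi Psi c v / ipPsi Psi c c
      else (ipPsi Psi c v - CSS * VSS * psi_xi Psi / 4) / (ipPsi Psi c c - CSS\<^sup>2 * psi_xi Psi / 4))"

definition neg_part :: "real \<Rightarrow> real" where "neg_part x = max (- x) 0"

definition zeta_tilde :: "vec4 \<Rightarrow> fun3 \<Rightarrow> fun5 \<Rightarrow> coef \<Rightarrow> coef \<Rightarrow> real \<Rightarrow> real \<Rightarrow> real \<Rightarrow> real \<Rightarrow> real \<Rightarrow> vec4" where
  "zeta_tilde Psi C V \<beta> \<gamma> t S A M Sg =
     (let c = cvec C t S Sg; v = vvec V \<beta> \<gamma> t S A M Sg;
          CSS = cSig (cSig C) t S Sg; VSS = pSig (pSig V) t S A M Sg;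
          l = lam Psi c v CSS VSS; m = neg_part (VSS - l * CSS) / 2
      in pmul Psi (v - l *\<^sub>R c + m *\<^sub>R (0,0,0,1)))"

definition zeta0 :: "real \<Rightarrow> vec4" where "zeta0 Sg = (0, Sg, 0, 0)"

definition zeta_psi :: "vec4 \<Rightarrow> fun3 \<Rightarrow> fun5 \<Rightarrow> coef \<Rightarrow> coef \<Rightarrow> real \<Rightarrow> real \<Rightarrow> real
    \<Rightarrow> real \<Rightarrow> real \<Rightarrow> real \<Rightarrow> real \<Rightarrow> real \<Rightarrow> vec4" where
  "zeta_psi Psi C V \<beta> \<gamma> Sl Sh psi t S A M Sg =
     zeta0 Sg + ((if Sl < Sg \<and> Sg < Sh then 1 else 0) * psi) *\<^sub>R zeta_tilde Psi C V \<beta> \<gamma> t S A M Sg"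

definition gtilde :: "vec4 \<Rightarrow> fun3 \<Rightarrow> fun5 \<Rightarrow> coef \<Rightarrow> coef \<Rightarrow> fun5" where
  "gtilde Psi C V \<beta> \<gamma> t S A M Sg = dot4 (vvec V \<beta> \<gamma> t S A M Sg) (zeta_tilde Psi C V \<beta> \<gamma> t S A M Sg)"

fun bC :: "fun3 \<Rightarrow> real \<Rightarrow> real \<Rightarrow> real \<Rightarrow> vec4 \<Rightarrow> real" where
  "bC C t S Sg (\<nu>,\<sigma>,\<eta>,\<xi>) = \<nu> * cSig C t S Sg + S\<^sup>2 * cS (cS C) t S Sg * (\<sigma>\<^sup>2 - Sg\<^sup>2) / 2
     + \<sigma> * \<eta> * S * cSig (cS C) t S Sg + (\<eta>\<^sup>2 + \<xi>) * cSig (cSig C) t S Sg / 2"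

text \<open>a^T Q b with Q = [[1, eta],[eta, eta^2 + xi]]\<close>
definition qf :: "real \<Rightarrow> real \<Rightarrow> real \<times> real \<Rightarrow> real \<times> real \<Rightarrow> real" where
  "qf \<eta> \<xi> a b = fst a * fst b + \<eta> * fst a * snd b + \<eta> * snd a * fst b + (\<eta>\<^sup>2 + \<xi>) * snd a * snd b"

definition H4 :: "(real \<Rightarrow> real) \<Rightarrow> fun5 \<Rightarrow> fun3 \<Rightarrow> coef \<Rightarrow> fun5 \<Rightarrow> real \<Rightarrow> real \<Rightarrow> real \<Rightarrow> real
    \<Rightarrow> real \<Rightarrow> real \<Rightarrow> real \<Rightarrow> real \<times> real \<Rightarrow> vec4 \<Rightarrow> real" where
  "H4 U V C \<gamma> w psi t S A M Sg y ups zeta =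
     (case ups of (\<theta>, \<phi>) \<Rightarrow> case zeta of (\<nu>, \<sigma>, \<eta>, \<xi>) \<Rightarrow>
       let wYY = deriv (deriv U) y - deriv (deriv (deriv U)) y * w t S A M Sg * psi;
           z = (\<sigma> * S * (\<theta> - (Delta V \<gamma> t S A M Sg - \<phi> * cS C t S Sg)),
                \<phi> * cSig C t S Sg - pSig V t S A M Sg);
           wv = (\<sigma> * S * (pS w t S A M Sg + \<gamma> t S A M * pA w t S A M Sg), pSig w t S A M Sg)
       in - (wYY / 2) * qf \<eta> \<xi> z z + psi * deriv (deriv U) y * qf \<eta> \<xi> wv z)"

end

theory Submission
  imports Defs
begin

text \<open>Let W = U''(y) - U'''(y) w psi be the coefficient w^psi_YY. Decreasing absolute risk
  aversion forces U''' \<ge> 0, so W \<le> U''(y) < 0 because w \<ge> 0. Completing the square in z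
  for the positive semidefinite form Q then bounds H_4 from below by psi^2 U''(y) q(v, v) / 2,
  where v is the vector of sensitivities of w. On the box Z one has q(v, v) \<le> 2 K_4 with
  K_4 = sigma_h^2 (S (w_S + gamma w_A))^2 + (eta_l^2 + eta_h^2 + xi_h) w_Sigma^2, which is in L^2
  because both of its ingredients are in L^4. This needs the L^p double integrals to be additive,
  hence the joint measurability of (omega, t) \<mapsto> X_t(omega), which is where most of the work lies.\<close>

section \<open>Joint measurability of the state process\<close>

lemma Omega_clamp:
  assumes "\<omega> \<in> Omega T S0 Sig0 A0"
  shows "\<omega> t = \<omega> (max 0 (min T t))"
  using assms unfolding Omega_def by auto

lemma continuous_on_Omega:
  assumes "0 \<le> T" and \<omega>: "\<omega> \<in> Omega T S0 Sig0 A0"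
  shows "continuous_on UNIV \<omega>"
proof -
  have "continuous_on {0..T} \<omega>" using \<omega> unfolding Omega_def by auto
  then have "continuous_on UNIV (\<lambda>t. \<omega> (max 0 (min T t)))"
    by (rule continuous_on_compose2) (use \<open>0 \<le> T\<close> in \<open>auto intro!: continuous_intros\<close>)
  then show ?thesis using Omega_clamp[OF \<omega>] by simp
qed

lemma dist_le_sup_dist:
  assumes "\<omega> \<in> Omega T S0 Sig0 A0" "\<omega>' \<in> Omega T S0 Sig0 A0" "t \<in> {0..T}"
  shows "dist (\<omega> t) (\<omega>' t) \<le> sup_dist T \<omega> \<omega>'"
proof -
  have "continuous_on {0..T} (\<lambda>u. dist (\<omega> u) (\<omega>' u))"
    using assms unfolding Omega_def by (auto intro!: continuous_intros)
  then have "bdd_above ((\<lambda>u. dist (\<omega> u) (\<omega>' u)) ` {0..T})"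
    by (intro bounded_imp_bdd_above compact_imp_bounded compact_continuous_image) auto
  then show ?thesis unfolding sup_dist_def using assms(3) by (rule cSUP_upper2) auto
qed

lemma measurable_path_eval:
  assumes "0 \<le> T" and sets_P: "sets P = path_events T (Omega T S0 Sig0 A0)"
    and space_P: "space P = Omega T S0 Sig0 A0"
  shows "(\<lambda>\<omega>. \<omega> t) \<in> borel_measurable P"
proof (rule borel_measurableI)
  fix B :: "(real \<times> real \<times> real) set" assume "open B"
  let ?\<Omega> = "Omega T S0 Sig0 A0"
  have "(\<lambda>\<omega>. \<omega> t) -` B \<inter> ?\<Omega> \<in> unif_open T ?\<Omega>"
    unfolding unif_open_def
  proof (intro CollectI conjI ballI)
    fix \<omega> assume "\<omega> \<in> (\<lambda>\<omega>. \<omega> t) -` B \<inter> ?\<Omega>"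
    then have \<omega>: "\<omega> \<in> ?\<Omega>" and "\<omega> t \<in> B" by auto
    then obtain r where r: "r > 0" "ball (\<omega> t) r \<subseteq> B"
      using \<open>open B\<close> open_contains_ball by blast
    have "\<omega>' t \<in> B" if "\<omega>' \<in> ?\<Omega>" "sup_dist T \<omega> \<omega>' < r" for \<omega>'
    proof -
      let ?t = "max 0 (min T t)"
      have "dist (\<omega> ?t) (\<omega>' ?t) < r"
        using dist_le_sup_dist[OF \<omega> that(1), of ?t] that(2) \<open>0 \<le> T\<close> by auto
      then show ?thesis using r Omega_clamp[OF \<omega>, of t] Omega_clamp[OF that(1), of t] by auto
    qed
    then show "\<exists>r>0. \<forall>\<omega>'\<in>?\<Omega>. sup_dist T \<omega> \<omega>' < r \<longrightarrow> \<omega>' \<in> (\<lambda>\<omega>. \<omega> t) -` B \<inter> ?\<Omega>"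
      using r(1) by blast
  qed auto
  then show "(\<lambda>\<omega>. \<omega> t) -` B \<inter> space P \<in> sets P"
    unfolding sets_P space_P path_events_def by (rule sigma_sets.Basic)
qed

lemma tendsto_floor_grid: "(\<lambda>n. real_of_int \<lfloor>real (Suc n) * t\<rfloor> / real (Suc n)) \<longlonglongrightarrow> t"
proof -
  have "\<bar>real_of_int \<lfloor>real (Suc n) * t\<rfloor> / real (Suc n) - t\<bar> \<le> 1 / real (Suc n)" for n
  proof -
    define N where "N = real (Suc n)"
    have "\<bar>real_of_int \<lfloor>N * t\<rfloor> - N * t\<bar> \<le> 1" by linarith
    moreover have "real_of_int \<lfloor>N * t\<rfloor> / N - t = (real_of_int \<lfloor>N * t\<rfloor> - N * t) / N"
      by (simp add: N_def field_simps)
    ultimately show ?thesis unfolding N_def by (simp add: abs_divide divide_right_mono)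
  qed
  then have "(\<lambda>n. real_of_int \<lfloor>real (Suc n) * t\<rfloor> / real (Suc n) - t) \<longlonglongrightarrow> 0"
    by (intro Lim_null_comparison[OF _ LIMSEQ_Suc[OF lim_inverse_n']]) (auto simp: divide_inverse)
  then show ?thesis by (simp add: LIM_zero_iff)
qed

text \<open>The process is the pointwise limit of its evaluations on the grids \<open>\<int>/(n+1)\<close>, each of
  which is measurable because it takes countably many time values.\<close>
lemma borel_measurable_continuous_process:
  fixes f :: "'a \<Rightarrow> real \<Rightarrow> 'b::metric_space"
  assumes meas: "\<And>t. (\<lambda>x. f x t) \<in> borel_measurable M"
    and cont: "\<And>x. x \<in> space M \<Longrightarrow> continuous_on UNIV (f x)"
  shows "(\<lambda>p. f (fst p) (snd p)) \<in> borel_measurable (M \<Otimes>\<^sub>M lborel)"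
proof (rule borel_measurable_LIMSEQ_metric)
  fix n :: nat
  have "(\<lambda>p. f (fst p) (real_of_int i / real (Suc n))) \<in> borel_measurable (M \<Otimes>\<^sub>M lborel)" for i
    by (rule measurable_compose[OF measurable_fst meas])
  moreover have "(\<lambda>p. \<lfloor>real (Suc n) * snd p\<rfloor>) \<in> measurable (M \<Otimes>\<^sub>M lborel) (count_space UNIV)"
    by measurable
  ultimately show "(\<lambda>p. f (fst p) (real_of_int \<lfloor>real (Suc n) * snd p\<rfloor> / real (Suc n)))
      \<in> borel_measurable (M \<Otimes>\<^sub>M lborel)"
    by (rule measurable_compose_countable[where f = "\<lambda>i p. f (fst p) (real_of_int i / real (Suc n))"])
next
  fix p :: "'a \<times> real" assume "p \<in> space (M \<Otimes>\<^sub>M lborel)"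
  then have "isCont (f (fst p)) (snd p)"
    using cont by (auto simp: space_pair_measure continuous_on_eq_continuous_at)
  then show "(\<lambda>n. f (fst p) (real_of_int \<lfloor>real (Suc n) * snd p\<rfloor> / real (Suc n))) \<longlonglongrightarrow> f (fst p) (snd p)"
    by (rule isCont_tendsto_compose[OF _ tendsto_floor_grid])
qed

lemma cSUP_closure_eq:
  fixes f :: "'a::topological_space \<Rightarrow> real"
  assumes cont: "continuous_on (closure D) f" and bdd: "bdd_above (f ` closure D)" and "D \<noteq> {}"
  shows "(SUP x\<in>D. f x) = (SUP x\<in>closure D. f x)"
proof (rule antisym)
  have bdd_D: "bdd_above (f ` D)"
    using bdd closure_subset by (meson bdd_above_mono image_mono)
  show "(SUP x\<in>D. f x) \<le> (SUP x\<in>closure D. f x)"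
    using closure_subset \<open>D \<noteq> {}\<close> bdd by (intro cSUP_subset_mono) auto
  have "f ` closure D \<subseteq> {..(SUP x\<in>D. f x)}"
    by (rule image_closure_subset[OF cont closed_atMost]) (auto intro: cSUP_upper[OF _ bdd_D])
  then show "(SUP x\<in>closure D. f x) \<le> (SUP x\<in>D. f x)"
    using \<open>D \<noteq> {}\<close> by (intro cSUP_least) auto
qed

lemma closure_Rats_unit_interval: "closure (\<rat> \<inter> {0..1::real}) = {0..1}"
proof
  show "closure (\<rat> \<inter> {0..1::real}) \<subseteq> {0..1}" by (rule closure_minimal) auto
  have "closure ({0<..<1::real} \<inter> \<rat>) = {0..1}"
    by (simp add: closure_open_Int_superset Rats_closure_real)
  then show "{0..1::real} \<subseteq> closure (\<rat> \<inter> {0..1})"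
    by (metis Int_commute closure_mono greaterThanLessThan_subseteq_atLeastAtMost_iff inf_mono order_refl)
qed

text \<open>The index set does not depend on \<open>t\<close>, which makes \<open>M\<close> jointly measurable.\<close>
lemma M_of_eq_SUP_Rats:
  assumes "0 \<le> T" and \<omega>: "\<omega> \<in> Omega T S0 Sig0 A0" and "0 \<le> t"
  shows "M_of \<omega> t = (SUP q\<in>\<rat> \<inter> {0..1}. S_of \<omega> (t * q))"
proof -
  define D where "D = (*) t ` (\<rat> \<inter> {0..1})"
  have "(*\<^sub>R) t = ((*) t :: real \<Rightarrow> real)" by (simp add: fun_eq_iff)
  then have "closure D = (*) t ` {0..1}"
    using closure_scaleR[of t "\<rat> \<inter> {0..1::real}"] by (simp add: D_def closure_Rats_unit_interval)
  also have "\<dots> = {0..t}" using \<open>0 \<le> t\<close> by (auto simp: image_mult_atLeastAtMost_if)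
  finally have closure_D: "closure D = {0..t}" .
  have cont: "continuous_on UNIV (S_of \<omega>)"
    unfolding S_of_def[abs_def] using continuous_on_Omega[OF \<open>0 \<le> T\<close> \<omega>] by (intro continuous_intros)
  have "bdd_above (S_of \<omega> ` {0..t})"
    by (intro bounded_imp_bdd_above compact_imp_bounded compact_continuous_image
        continuous_on_subset[OF cont]) auto
  moreover have "D \<noteq> {}" unfolding D_def by (metis Int_iff Rats_0 atLeastAtMost_iff empty_iff
        image_eqI zero_le_one order_refl)
  ultimately have "(SUP u\<in>D. S_of \<omega> u) = M_of \<omega> t"
    unfolding M_of_def using cSUP_closure_eq[of D "S_of \<omega>"] continuous_on_subset[OF cont]
    by (simp add: closure_D)
  then show ?thesis by (simp add: D_def image_comp comp_def)
qed

lemma measurable_M_of: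
  assumes "0 \<le> T" and "sets P = path_events T (Omega T S0 Sig0 A0)"
    and space_P: "space P = Omega T S0 Sig0 A0"
  shows "(\<lambda>p. M_of (fst p) (snd p)) \<in> borel_measurable (P \<Otimes>\<^sub>M lborel)"
proof -
  have cont_S: "continuous_on UNIV (\<lambda>t. S_of \<omega> (t * q))" if "\<omega> \<in> space P" for \<omega> q
  proof -
    have "continuous_on UNIV \<omega>" using continuous_on_Omega[OF \<open>0 \<le> T\<close>] that space_P by simp
    then have "continuous_on UNIV (\<lambda>t. \<omega> (t * q))"
      by (rule continuous_on_compose2) (simp_all add: continuous_on_mult_right)
    then show ?thesis unfolding S_of_def by (rule continuous_on_fst)
  qed
  have S_scaled: "(\<lambda>p. S_of (fst p) (snd p * q)) \<in> borel_measurable (P \<Otimes>\<^sub>M lborel)" for q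
  proof (rule borel_measurable_continuous_process[of "\<lambda>\<omega> t. S_of \<omega> (t * q)", OF _ cont_S])
    show "(\<lambda>\<omega>. S_of \<omega> (t * q)) \<in> borel_measurable P" for t
      unfolding S_of_def
      by (rule borel_measurable_continuous_on[OF continuous_on_fst[OF continuous_on_id] measurable_path_eval[OF assms]])
  qed
  have bdd: "bdd_above ((\<lambda>q. S_of \<omega> (t * q)) ` (\<rat> \<inter> {0..1}))" if "\<omega> \<in> space P" for \<omega> t
  proof -
    have "continuous_on UNIV (\<lambda>q. S_of \<omega> (t * q))"
      using cont_S[OF that, of t] by (simp add: mult.commute)
    then have "compact ((\<lambda>q. S_of \<omega> (t * q)) ` {0..1})"
      by (rule compact_continuous_image[OF continuous_on_subset[OF _ subset_UNIV]]) simp_all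
    then have "bdd_above ((\<lambda>q. S_of \<omega> (t * q)) ` {0..1})"
      by (intro bounded_imp_bdd_above compact_imp_bounded)
    then show ?thesis by (rule bdd_above_mono) auto
  qed
  have [measurable]: "(\<lambda>p. SUP q\<in>\<rat> \<inter> {0..1}. S_of (fst p) (snd p * q)) \<in> borel_measurable (P \<Otimes>\<^sub>M lborel)"
    using bdd by (intro borel_measurable_cSUP S_scaled) (auto simp: countable_rat space_pair_measure)
  have "(\<lambda>p. if snd p < 0 then Sup {} else SUP q\<in>\<rat> \<inter> {0..1}. S_of (fst p) (snd p * q))
      \<in> borel_measurable (P \<Otimes>\<^sub>M lborel)"
    by measurable
  then show ?thesis
  proof (rule measurable_cong[THEN iffD1, rotated])
    fix p :: "path \<times> real" assume "p \<in> space (P \<Otimes>\<^sub>M lborel)"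
    then have "fst p \<in> Omega T S0 Sig0 A0" by (auto simp: space_pair_measure space_P)
    then show "(if snd p < 0 then Sup {} else SUP q\<in>\<rat> \<inter> {0..1}. S_of (fst p) (snd p * q))
        = M_of (fst p) (snd p)"
      using M_of_eq_SUP_Rats[OF \<open>0 \<le> T\<close>, of "fst p" S0 Sig0 A0 "snd p"] by (auto simp: M_of_def)
  qed
qed

lemma measurable_X:
  assumes "0 \<le> T" and "sets P = path_events T (Omega T S0 Sig0 A0)"
    and space_P: "space P = Omega T S0 Sig0 A0"
  shows "(\<lambda>p. X (fst p) (snd p)) \<in> borel_measurable (P \<Otimes>\<^sub>M lborel)"
proof -
  have "(\<lambda>p. fst p (snd p)) \<in> borel_measurable (P \<Otimes>\<^sub>M lborel)"
    using borel_measurable_continuous_process[of "\<lambda>\<omega> t. \<omega> t"] measurable_path_eval[OF assms]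
      continuous_on_Omega[OF \<open>0 \<le> T\<close>] space_P by blast
  note [measurable] = this measurable_M_of[OF assms]
  show ?thesis unfolding X_def S_of_def A_of_def Sig_of_def
    by (intro borel_measurable_Pair borel_measurable_continuous_on[OF continuous_on_fst[OF continuous_on_id]]
        borel_measurable_continuous_on[OF continuous_on_snd[OF continuous_on_id]])
       measurable
qed

section \<open>Integrals along paths\<close>

definition path_integrand :: "real \<Rightarrow> (real \<Rightarrow> real \<times> real \<times> real \<times> real \<Rightarrow> ennreal) \<Rightarrow> path \<times> real \<Rightarrow> ennreal"
  where "path_integrand T g = (\<lambda>(\<omega>, t). if (t, X \<omega> t) \<in> D0 T then g t (X \<omega> t) else 0)"

lemma open_D0: "open (D0 T)"
proof -
  have "D0 T = {p. 0 < fst p} \<inter> {p. fst p < T} \<inter> {p. 0 < fst (snd p)}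
      \<inter> {p. 0 < fst (snd (snd (snd p)))} \<inter> {p. 0 < snd (snd (snd (snd p)))}"
    by (auto simp: D0_def)
  then show ?thesis by (simp only:) (intro open_Int open_Collect_less continuous_intros)
qed

lemma borel_measurable_path_integrand:
  assumes "0 \<le> T" and "sets P = path_events T (Omega T S0 Sig0 A0)"
    and "space P = Omega T S0 Sig0 A0"
    and g: "(\<lambda>(t, x). g t x) \<in> borel_measurable (restrict_space borel (D0 T))"
  shows "path_integrand T g \<in> borel_measurable (P \<Otimes>\<^sub>M lborel)"
proof -
  define Y where "Y = (\<lambda>p::path \<times> real. (snd p, X (fst p) (snd p)))"
  have Y: "Y \<in> borel_measurable (P \<Otimes>\<^sub>M lborel)"
    unfolding Y_def by (intro borel_measurable_Pair measurable_X[OF assms(1-3)]) measurable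
  have "{p \<in> space (P \<Otimes>\<^sub>M lborel). Y p \<in> D0 T} \<in> sets (P \<Otimes>\<^sub>M lborel)"
    using measurable_sets[OF Y borel_open[OF open_D0]] by (simp add: vimage_def Int_def conj_commute)
  moreover have "(\<lambda>p. (\<lambda>(t, x). g t x) (Y p)) \<in> borel_measurable (restrict_space (P \<Otimes>\<^sub>M lborel) {p. Y p \<in> D0 T})"
    by (rule measurable_compose[OF measurable_restrict_space3[OF Y] g]) auto
  ultimately have "(\<lambda>p. if Y p \<in> D0 T then (\<lambda>(t, x). g t x) (Y p) else 0) \<in> borel_measurable (P \<Otimes>\<^sub>M lborel)"
    by (subst measurable_If_restrict_space_iff) auto
  moreover have "path_integrand T g = (\<lambda>p. if Y p \<in> D0 T then (\<lambda>(t, x). g t x) (Y p) else 0)"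
    by (auto simp: path_integrand_def Y_def fun_eq_iff)
  ultimately show ?thesis by simp
qed

lemma X_in_D0:
  assumes "0 \<le> T" and \<omega>: "\<omega> \<in> Omega T S0 Sig0 A0"
    and pos: "\<forall>t\<in>{0..T}. 0 < S_of \<omega> t \<and> 0 < Sig_of \<omega> t" and t: "0 < t" "t < T"
  shows "(t, X \<omega> t) \<in> D0 T"
proof -
  have "continuous_on {0..t} (S_of \<omega>)"
    unfolding S_of_def[abs_def] using continuous_on_Omega[OF \<open>0 \<le> T\<close> \<omega>]
    by (intro continuous_intros) (auto intro: continuous_on_subset)
  then have "bdd_above (S_of \<omega> ` {0..t})"
    by (intro bounded_imp_bdd_above compact_imp_bounded compact_continuous_image) auto
  then have "S_of \<omega> t \<le> M_of \<omega> t"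
    unfolding M_of_def using t by (intro cSUP_upper) auto
  moreover have "0 < S_of \<omega> t" "0 < Sig_of \<omega> t" using pos t by auto
  ultimately show ?thesis using t by (simp add: D0_def X_def)
qed

lemma nn_integral_path_integrand:
  assumes "0 \<le> T" and "sets P = path_events T (Omega T S0 Sig0 A0)"
    and space_P: "space P = Omega T S0 Sig0 A0"
    and pos: "AE \<omega> in P. \<forall>t\<in>{0..T}. 0 < S_of \<omega> t \<and> 0 < Sig_of \<omega> t"
    and g: "(\<lambda>(t, x). g t x) \<in> borel_measurable (restrict_space borel (D0 T))"
  shows "(\<integral>\<^sup>+\<omega>. (\<integral>\<^sup>+t\<in>{0..T}. g t (X \<omega> t) \<partial>lborel) \<partial>P)
      = (\<integral>\<^sup>+p. path_integrand T g p \<partial>(P \<Otimes>\<^sub>M lborel))"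
proof -
  have "AE \<omega> in P. (\<integral>\<^sup>+t\<in>{0..T}. g t (X \<omega> t) \<partial>lborel) = (\<integral>\<^sup>+t. path_integrand T g (\<omega>, t) \<partial>lborel)"
    using AE_space pos
  proof eventually_elim
    case (elim \<omega>)
    have "AE t in lborel. g t (X \<omega> t) * indicator {0..T} t = path_integrand T g (\<omega>, t)"
      using AE_lborel_singleton[of 0] AE_lborel_singleton[of T]
    proof eventually_elim
      case (elim t)
      then show ?case
        using X_in_D0[OF \<open>0 \<le> T\<close>, of \<omega> S0 Sig0 A0 t] \<open>\<omega> \<in> space P\<close> \<open>\<forall>t\<in>{0..T}. 0 < S_of \<omega> t \<and> 0 < Sig_of \<omega> t\<close>
        by (auto simp: path_integrand_def D0_def space_P)
    qed
    then show ?case by (rule nn_integral_cong_AE)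
  qed
  then have "(\<integral>\<^sup>+\<omega>. (\<integral>\<^sup>+t\<in>{0..T}. g t (X \<omega> t) \<partial>lborel) \<partial>P)
      = (\<integral>\<^sup>+\<omega>. (\<integral>\<^sup>+t. path_integrand T g (\<omega>, t) \<partial>lborel) \<partial>P)"
    by (rule nn_integral_cong_AE)
  also have "\<dots> = (\<integral>\<^sup>+p. path_integrand T g p \<partial>(P \<Otimes>\<^sub>M lborel))"
    by (rule lborel.nn_integral_fst[OF borel_measurable_path_integrand[OF assms(1-3) g]])
  finally show ?thesis .
qed

lemma nn_integral_paths_le_lincomb:
  fixes h f g :: "real \<Rightarrow> real \<times> real \<times> real \<times> real \<Rightarrow> ennreal"
  assumes "0 \<le> T" and "sets P = path_events T (Omega T S0 Sig0 A0)"
    and "space P = Omega T S0 Sig0 A0"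
    and "AE \<omega> in P. \<forall>t\<in>{0..T}. 0 < S_of \<omega> t \<and> 0 < Sig_of \<omega> t"
    and h: "(\<lambda>(t, x). h t x) \<in> borel_measurable (restrict_space borel (D0 T))"
    and f: "(\<lambda>(t, x). f t x) \<in> borel_measurable (restrict_space borel (D0 T))"
    and g: "(\<lambda>(t, x). g t x) \<in> borel_measurable (restrict_space borel (D0 T))"
    and le: "\<And>t x. h t x \<le> c * f t x + d * g t x"
  shows "(\<integral>\<^sup>+\<omega>. (\<integral>\<^sup>+t\<in>{0..T}. h t (X \<omega> t) \<partial>lborel) \<partial>P)
      \<le> c * (\<integral>\<^sup>+\<omega>. (\<integral>\<^sup>+t\<in>{0..T}. f t (X \<omega> t) \<partial>lborel) \<partial>P)
        + d * (\<integral>\<^sup>+\<omega>. (\<integral>\<^sup>+t\<in>{0..T}. g t (X \<omega> t) \<partial>lborel) \<partial>P)"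
proof -
  note integral_eq = nn_integral_path_integrand[OF assms(1-4)]
  note [measurable] = borel_measurable_path_integrand[OF assms(1-3) f]
    borel_measurable_path_integrand[OF assms(1-3) g]
  have "(\<integral>\<^sup>+\<omega>. (\<integral>\<^sup>+t\<in>{0..T}. h t (X \<omega> t) \<partial>lborel) \<partial>P)
      \<le> (\<integral>\<^sup>+p. c * path_integrand T f p + d * path_integrand T g p \<partial>(P \<Otimes>\<^sub>M lborel))"
    unfolding integral_eq[OF h] by (intro nn_integral_mono) (auto simp: path_integrand_def le)
  also have "\<dots> = c * (\<integral>\<^sup>+p. path_integrand T f p \<partial>(P \<Otimes>\<^sub>M lborel))
      + d * (\<integral>\<^sup>+p. path_integrand T g p \<partial>(P \<Otimes>\<^sub>M lborel))"
    by (simp add: nn_integral_add nn_integral_cmult)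
  finally show ?thesis unfolding integral_eq[OF f] integral_eq[OF g] .
qed

lemma sum_of_squares_sq_le:
  fixes a b x y :: real
  shows "ennreal (\<bar>a * x\<^sup>2 + b * y\<^sup>2\<bar> powr 2)
    \<le> ennreal (2 * a\<^sup>2) * ennreal (\<bar>x\<bar> powr 4) + ennreal (2 * b\<^sup>2) * ennreal (\<bar>y\<bar> powr 4)"
proof -
  have "0 \<le> (a * x\<^sup>2 - b * y\<^sup>2)\<^sup>2" by simp
  then have "(a * x\<^sup>2 + b * y\<^sup>2)\<^sup>2 \<le> 2 * a\<^sup>2 * x ^ 4 + 2 * b\<^sup>2 * y ^ 4"
    by (simp add: power2_eq_square power4_eq_xxxx algebra_simps)
  then show ?thesis
    by (simp add: powr_numeral ennreal_mult[symmetric] ennreal_plus[symmetric] zero_le_even_power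
        del: ennreal_plus)
qed

lemma Lp_sum_of_squares:
  fixes F G :: "real \<Rightarrow> real \<times> real \<times> real \<times> real \<Rightarrow> real"
  assumes "0 \<le> T"
    and models: "\<forall>P\<in>Ps. space P = Omega T S0 Sig0 A0 \<and> sets P = path_events T (Omega T S0 Sig0 A0)"
    and pos: "\<forall>P\<in>Ps. AE \<omega> in P. \<forall>t\<in>{0..T}. 0 < S_of \<omega> t \<and> 0 < Sig_of \<omega> t"
    and F: "Lp 4 T Ps F" and G: "Lp 4 T Ps G" and "0 \<le> a" "0 \<le> b"
  shows "Lp 2 T Ps (\<lambda>t x. a * (F t x)\<^sup>2 + b * (G t x)\<^sup>2)"
proof -
  define K where "K = (\<lambda>t x. a * (F t x)\<^sup>2 + b * (G t x)\<^sup>2)"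
  from F obtain BF where mF[measurable]: "(\<lambda>(t, x). F t x) \<in> borel_measurable (restrict_space borel (D0 T))"
    and BF: "BF < \<infinity>" "\<forall>P\<in>Ps. (\<integral>\<^sup>+\<omega>. (\<integral>\<^sup>+t\<in>{0..T}. ennreal (\<bar>F t (X \<omega> t)\<bar> powr 4) \<partial>lborel) \<partial>P) \<le> BF"
    unfolding Lp_def by blast
  from G obtain BG where mG[measurable]: "(\<lambda>(t, x). G t x) \<in> borel_measurable (restrict_space borel (D0 T))"
    and BG: "BG < \<infinity>" "\<forall>P\<in>Ps. (\<integral>\<^sup>+\<omega>. (\<integral>\<^sup>+t\<in>{0..T}. ennreal (\<bar>G t (X \<omega> t)\<bar> powr 4) \<partial>lborel) \<partial>P) \<le> BG"
    unfolding Lp_def by blast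
  have mK: "(\<lambda>(t, x). K t x) \<in> borel_measurable (restrict_space borel (D0 T))"
  proof -
    have "(\<lambda>(t, x). K t x) = (\<lambda>p. a * ((\<lambda>(t, x). F t x) p)\<^sup>2 + b * ((\<lambda>(t, x). G t x) p)\<^sup>2)"
      by (auto simp: K_def)
    then show ?thesis by simp
  qed
  have m_powr: "(\<lambda>(t, x). ennreal (\<bar>h t x\<bar> powr r)) \<in> borel_measurable (restrict_space borel (D0 T))"
    if "(\<lambda>(t, x). h t x) \<in> borel_measurable (restrict_space borel (D0 T))" for r h
  proof -
    have "(\<lambda>z. ennreal (\<bar>z\<bar> powr r)) \<in> borel_measurable borel" by measurable
    from measurable_compose[OF that this] show ?thesis by (simp add: case_prod_beta)
  qed
  define B where "B = ennreal (2 * a\<^sup>2) * BF + ennreal (2 * b\<^sup>2) * BG"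
  have "(\<integral>\<^sup>+\<omega>. (\<integral>\<^sup>+t\<in>{0..T}. ennreal (\<bar>K t (X \<omega> t)\<bar> powr 2) \<partial>lborel) \<partial>P) \<le> B" if "P \<in> Ps" for P
  proof -
    have P: "sets P = path_events T (Omega T S0 Sig0 A0)" "space P = Omega T S0 Sig0 A0"
      "AE \<omega> in P. \<forall>t\<in>{0..T}. 0 < S_of \<omega> t \<and> 0 < Sig_of \<omega> t"
      using models pos that by auto
    have "(\<integral>\<^sup>+\<omega>. (\<integral>\<^sup>+t\<in>{0..T}. ennreal (\<bar>K t (X \<omega> t)\<bar> powr 2) \<partial>lborel) \<partial>P)
        \<le> ennreal (2 * a\<^sup>2) * (\<integral>\<^sup>+\<omega>. (\<integral>\<^sup>+t\<in>{0..T}. ennreal (\<bar>F t (X \<omega> t)\<bar> powr 4) \<partial>lborel) \<partial>P)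
          + ennreal (2 * b\<^sup>2) * (\<integral>\<^sup>+\<omega>. (\<integral>\<^sup>+t\<in>{0..T}. ennreal (\<bar>G t (X \<omega> t)\<bar> powr 4) \<partial>lborel) \<partial>P)"
      by (rule nn_integral_paths_le_lincomb[OF \<open>0 \<le> T\<close> P m_powr[OF mK] m_powr[OF mF] m_powr[OF mG]])
         (unfold K_def, rule sum_of_squares_sq_le)
    also have "\<dots> \<le> B"
      unfolding B_def using BF(2) BG(2) that by (intro add_mono mult_left_mono) auto
    finally show ?thesis .
  qed
  moreover have "B < \<infinity>" using BF(1) BG(1) by (simp add: B_def ennreal_mult_less_top)
  ultimately show ?thesis using mK unfolding Lp_def K_def by blast
qed

section \<open>The pointwise estimate\<close>

lemma qf_self: "qf \<eta> \<xi> (a, b) (a, b) = (a + \<eta> * b)\<^sup>2 + \<xi> * b\<^sup>2"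
  unfolding qf_def by (simp add: power2_eq_square algebra_simps)

lemma qf_self_nonneg: "0 \<le> \<xi> \<Longrightarrow> 0 \<le> qf \<eta> \<xi> v v"
  by (cases v) (simp add: qf_self)

text \<open>Completing the square: \<open>q(z,z) - 2 p q(v,z) = q(z - p v, z - p v) - p\<^sup>2 q(v,v)\<close>.\<close>
lemma qf_completing_square:
  fixes W u p :: real
  assumes "W \<le> u" "u \<le> 0" "0 \<le> \<xi>"
  shows "p\<^sup>2 * u * qf \<eta> \<xi> v v / 2 \<le> - (W / 2) * qf \<eta> \<xi> z z + p * u * qf \<eta> \<xi> v z"
proof -
  obtain z1 z2 v1 v2 where zv: "z = (z1, z2)" "v = (v1, v2)" by (cases z, cases v)
  define r where "r = qf \<eta> \<xi> (z1 - p * v1, z2 - p * v2) (z1 - p * v1, z2 - p * v2)"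
  have "qf \<eta> \<xi> z z - 2 * p * qf \<eta> \<xi> v z = r - p\<^sup>2 * qf \<eta> \<xi> v v"
    unfolding zv r_def qf_def by (simp add: power2_eq_square algebra_simps)
  then have "p * u * qf \<eta> \<xi> v z = u / 2 * (qf \<eta> \<xi> z z - r + p\<^sup>2 * qf \<eta> \<xi> v v)"
    by (simp add: algebra_simps)
  moreover have "W * qf \<eta> \<xi> z z \<le> u * qf \<eta> \<xi> z z"
    using assms qf_self_nonneg[of \<xi> \<eta> z] by (intro mult_right_mono) auto
  moreover have "u * r \<le> 0"
    using assms qf_self_nonneg unfolding r_def by (intro mult_nonpos_nonneg) auto
  ultimately show ?thesis by (simp add: algebra_simps)
qed

lemma qf_self_le:
  fixes \<sigma> \<eta> \<xi> sh el eh xh :: real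
  assumes "\<bar>\<sigma>\<bar> \<le> sh" "el \<le> \<eta>" "\<eta> \<le> eh" "0 \<le> \<xi>" "\<xi> \<le> xh"
  shows "qf \<eta> \<xi> (\<sigma> * a, b) (\<sigma> * a, b) \<le> 2 * (sh\<^sup>2 * a\<^sup>2 + (el\<^sup>2 + eh\<^sup>2 + xh) * b\<^sup>2)"
proof -
  have "(\<sigma> * a + \<eta> * b)\<^sup>2 \<le> 2 * (\<sigma>\<^sup>2 * a\<^sup>2) + 2 * (\<eta>\<^sup>2 * b\<^sup>2)"
    using sum_squares_ge_zero[of "\<sigma> * a - \<eta> * b" 0] by (simp add: power2_eq_square algebra_simps)
  moreover have "\<sigma>\<^sup>2 \<le> sh\<^sup>2"
    using power_mono[OF assms(1), of 2] by simp
  then have "\<sigma>\<^sup>2 * a\<^sup>2 \<le> sh\<^sup>2 * a\<^sup>2" by (simp add: mult_right_mono)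
  moreover have "\<eta>\<^sup>2 \<le> el\<^sup>2 + eh\<^sup>2"
  proof (cases "0 \<le> \<eta>")
    case True
    then show ?thesis using assms(3) power_mono[of \<eta> eh 2] by (simp add: add_increasing)
  next
    case False
    then show ?thesis using assms(2) power_mono[of "- \<eta>" "- el" 2] by (simp add: add_increasing2)
  qed
  then have "\<eta>\<^sup>2 * b\<^sup>2 \<le> (el\<^sup>2 + eh\<^sup>2) * b\<^sup>2" by (simp add: mult_right_mono)
  moreover have "\<xi> * b\<^sup>2 \<le> 2 * xh * b\<^sup>2" using assms(4,5) by (intro mult_right_mono) auto
  ultimately show ?thesis unfolding qf_self by (simp add: algebra_simps)
qed

lemma deriv3_nonneg_if_antimono_ARA:
  fixes U :: "real \<Rightarrow> real"
  assumes d1: "deriv U differentiable (at y)" and d2: "deriv (deriv U) differentiable (at y)"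
    and U'_pos: "\<And>x. 0 < deriv U x"
    and DARA: "antimono (\<lambda>x. - deriv (deriv U) x / deriv U x)"
  shows "0 \<le> deriv (deriv (deriv U)) y"
proof -
  define ARA where "ARA = (\<lambda>x. - deriv (deriv U) x / deriv U x)"
  define D where "D = ((deriv (deriv U) y)\<^sup>2 - deriv (deriv (deriv U)) y * deriv U y) / (deriv U y)\<^sup>2"
  have "DERIV (deriv U) y :> deriv (deriv U) y" "DERIV (deriv (deriv U)) y :> deriv (deriv (deriv U)) y"
    using d1 d2 by (simp_all add: DERIV_deriv_iff_real_differentiable)
  then have "DERIV ARA y :> D"
    unfolding ARA_def D_def using U'_pos[of y]
    by (auto intro!: derivative_eq_intros simp: field_simps power2_eq_square)
  have "D \<le> 0"
  proof (rule ccontr)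
    assume "\<not> D \<le> 0"
    then obtain d where "0 < d" and inc: "\<And>h. 0 < h \<Longrightarrow> h < d \<Longrightarrow> ARA y < ARA (y + h)"
      using DERIV_pos_inc_right[OF \<open>DERIV ARA y :> D\<close>] by force
    then have "ARA y < ARA (y + d / 2)" by simp
    moreover have "ARA (y + d / 2) \<le> ARA y" using DARA \<open>0 < d\<close> by (simp add: ARA_def antimono_def)
    ultimately show False by simp
  qed
  then have "(deriv (deriv U) y)\<^sup>2 \<le> deriv (deriv (deriv U)) y * deriv U y"
    using U'_pos[of y] by (simp add: D_def divide_le_0_iff)
  then show ?thesis using U'_pos[of y] by (metis zero_le_power2 order.trans zero_le_mult_iff not_le order_less_imp_le)
qed

lemma H4_ge_of_qf_le:
  fixes U :: "real \<Rightarrow> real"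
  assumes U''_neg: "deriv (deriv U) y < 0" and "0 \<le> deriv (deriv (deriv U)) y"
    and "0 \<le> w t S A M Sg" "0 < psi" "0 \<le> \<xi>"
    and qf_le: "qf \<eta> \<xi> (\<sigma> * (S * Delta w \<gamma> t S A M Sg), pSig w t S A M Sg)
      (\<sigma> * (S * Delta w \<gamma> t S A M Sg), pSig w t S A M Sg) \<le> 2 * k"
  shows "deriv (deriv U) y * k * psi\<^sup>2 \<le> H4 U V C \<gamma> w psi t S A M Sg y (\<theta>, \<phi>) (\<nu>, \<sigma>, \<eta>, \<xi>)"
proof -
  define W where "W = deriv (deriv U) y - deriv (deriv (deriv U)) y * w t S A M Sg * psi"
  define z where "z = (\<sigma> * S * (\<theta> - (Delta V \<gamma> t S A M Sg - \<phi> * cS C t S Sg)),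
    \<phi> * cSig C t S Sg - pSig V t S A M Sg)"
  define v where "v = (\<sigma> * (S * Delta w \<gamma> t S A M Sg), pSig w t S A M Sg)"
  have "W \<le> deriv (deriv U) y"
    unfolding W_def using assms by (auto intro!: mult_nonneg_nonneg)
  have "psi\<^sup>2 * qf \<eta> \<xi> v v \<le> psi\<^sup>2 * (2 * k)"
    using qf_le unfolding v_def by (simp add: mult_left_mono)
  from mult_left_mono_neg[OF this, of "deriv (deriv U) y"]
  have "deriv (deriv U) y * k * psi\<^sup>2 \<le> psi\<^sup>2 * deriv (deriv U) y * qf \<eta> \<xi> v v / 2"
    using U''_neg by (simp add: algebra_simps)
  also have "\<dots> \<le> - (W / 2) * qf \<eta> \<xi> z z + psi * deriv (deriv U) y * qf \<eta> \<xi> v z"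
    using \<open>W \<le> deriv (deriv U) y\<close> U''_neg \<open>0 \<le> \<xi>\<close> by (intro qf_completing_square) auto
  also have "\<dots> = H4 U V C \<gamma> w psi t S A M Sg y (\<theta>, \<phi>) (\<nu>, \<sigma>, \<eta>, \<xi>)"
  proof -
    have "(\<sigma> * S * (pS w t S A M Sg + \<gamma> t S A M * pA w t S A M Sg), pSig w t S A M Sg) = v"
      by (simp add: v_def Delta_def)
    then show ?thesis unfolding H4_def Let_def prod.case W_def z_def by simp
  qed
  finally show ?thesis .
qed

theorem proposition5p12:
  fixes T S0 Sig0 A0 Sl Sh TC :: real
    and \<alpha> \<beta> \<gamma> \<delta> :: coef
    and C :: fun3 and V :: fun5 and w :: fun5
    and U :: "real \<Rightarrow> real"
    and Psi :: vec4
    and Pset :: "path measure set"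
    and zetaP :: "path measure \<Rightarrow> real \<Rightarrow> path \<Rightarrow> vec4"
    and nul nuh sigl sigh etal etah xih KV Kw :: real
  assumes T_pos: "0 < T" and S0_pos: "0 < S0"
    and Sig_bounds: "0 < Sl" "Sl < Sig0" "Sig0 < Sh"
    and Psi_pos: "0 < fst Psi" "0 < fst (snd Psi)" "0 < fst (snd (snd Psi))" "0 < snd (snd (snd Psi))"
    \<comment> \<open>models: probability measures on (Omega, F), with characteristics zetaP\<close>
    and models: "\<forall>P\<in>Pset. prob_space P \<and> space P = Omega T S0 Sig0 A0
                   \<and> sets P = path_events T (Omega T S0 Sig0 A0)"
    and P00_pos: "\<forall>P\<in>Pset. AE \<omega> in P. \<forall>t\<in>{0..T}. 0 < S_of \<omega> t \<and> 0 < Sig_of \<omega> t"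
    and P00_drift: "\<forall>P\<in>Pset. AE \<omega> in P. AE t in lborel. t \<in> {0..T} \<longrightarrow>
                      0 \<le> snd (snd (snd (zetaP P t \<omega>)))
                      \<and> bC C t (S_of \<omega> t) (Sig_of \<omega> t) (zetaP P t \<omega>) = 0"
    \<comment> \<open>Assumption (A)(b)\<close>
    and const_bounds: "nul < 0" "0 < nuh" "0 < sigl" "sigl < Sl" "Sh < sigh" "etal < 0" "0 < etah" "0 < xih"
    and Ab_bounds: "\<forall>P\<in>Pset. AE \<omega> in P. AE t in lborel. t \<in> {0..T} \<longrightarrow>
         (case zetaP P t \<omega> of (\<nu>, \<sigma>, \<eta>, \<xi>) \<Rightarrow>
            nul \<le> \<nu> \<and> \<nu> \<le> nuh \<and> sigl \<le> \<sigma> \<and> \<sigma> \<le> sigh \<and> etal \<le> \<eta> \<and> \<eta> \<le> etah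
            \<and> 0 \<le> \<xi> \<and> \<xi> \<le> xih)
         \<and> Sl \<le> Sig_of \<omega> t \<and> Sig_of \<omega> t \<le> Sh"
    and reference_model: "\<exists>P\<in>Pset. AE \<omega> in P. AE t in lborel. t \<in> {0..T} \<longrightarrow>
                            zetaP P t \<omega> = zeta0 (Sig_of \<omega> t)"
    and candidate_family: "\<exists>psi0 Ppsi K0. 0 < psi0 \<and> psi0 < 1 \<and> Lp 4 T Pset K0 \<and>
         (\<forall>psi\<in>{0<..<psi0}. Ppsi psi \<in> Pset \<and>
            (AE \<omega> in Ppsi psi. AE t in lborel. t \<in> {0..T} \<longrightarrow>
               norm (zetaP (Ppsi psi) t \<omega> -
                 (case X \<omega> t of (S, A, M, Sg) \<Rightarrow> zeta_psi Psi C V \<beta> \<gamma> Sl Sh psi t S A M Sg))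
               \<le> K0 t (X \<omega> t) * psi\<^sup>2))"
    \<comment> \<open>Assumption (A)(c)\<close>
    and TC: "T \<le> TC"
    and C_smooth: "C122 C {(t,S,Sg). 0 < t \<and> t < TC \<and> 0 < S \<and> 0 < Sg}"
    and C_cont: "cont3 C (closure {(t,S,Sg). 0 < t \<and> t < TC \<and> 0 < S \<and> 0 < Sg})"
    and C_pde: "\<forall>t S Sg. 0 < t \<and> t < TC \<and> 0 < S \<and> Sl \<le> Sg \<and> Sg \<le> Sh \<longrightarrow>
                   ct C t S Sg + Sg\<^sup>2 * S\<^sup>2 * cS (cS C) t S Sg / 2 = 0"
    and C_vega: "\<exists>KC. Lp 2 T Pset KC \<and>
         (\<forall>(t,S,A,M,Sg)\<in>DD T Sl Sh. cSig C t S Sg \<noteq> 0 \<and>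
            \<bar>cSig (cSig C) t S Sg\<bar> \<le> KC t (S,A,M,Sg) *
               (\<bar>cSig C t S Sg\<bar> + \<bar>S\<^sup>2 * cS (cS C) t S Sg\<bar> + \<bar>S * cSig (cS C) t S Sg\<bar>))"
    \<comment> \<open>Assumption (A)(d)\<close>
    and V_smooth: "C12212 V (D0 T)" and V_cont: "cont5 V (closure (D0 T))"
    and V_pde: "\<forall>(t,S,A,M,Sg)\<in>DD T Sl Sh.
         pt V t S A M Sg + (\<alpha> t S A M + \<beta> t S A M * Sg\<^sup>2 / 2) * pA V t S A M Sg
         + Sg\<^sup>2 * S\<^sup>2 * Gam V \<gamma> t S A M Sg / 2 = 0"
    and V_bdry: "\<forall>(t,S,A,M,Sg)\<in>DD T Sl Sh. M \<le> S \<longrightarrow>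
         \<delta> t S A M * pA V t S A M Sg + pM V t S A M Sg = 0"
    and V_bounds: "\<forall>(t,S,A,M,Sg)\<in>DD T Sl Sh.
         \<bar>pSig V t S A M Sg\<bar> \<le> KV \<and>
         \<bar>\<beta> t S A M * pA V t S A M Sg + S\<^sup>2 * Gam V \<gamma> t S A M Sg\<bar> \<le> KV \<and>
         \<bar>S * dDelta_dSig V \<gamma> t S A M Sg\<bar> \<le> KV \<and>
         \<bar>pSig (pSig V) t S A M Sg\<bar> \<le> KV"
    \<comment> \<open>Assumption (A)(e)\<close>
    and w_smooth: "C12212 w (D0 T)" and w_cont: "cont5 w (closure (D0 T))"
    and w_pde: "\<forall>(t,S,A,M,Sg)\<in>DD T Sl Sh.
         pt w t S A M Sg + (\<alpha> t S A M + \<beta> t S A M * Sg\<^sup>2 / 2) * pA w t S A M Sg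
         + Sg\<^sup>2 * S\<^sup>2 * Gam w \<gamma> t S A M Sg / 2 + gtilde Psi C V \<beta> \<gamma> t S A M Sg / 2 = 0"
    and w_bdry: "\<forall>(t,S,A,M,Sg)\<in>DD T Sl Sh. M \<le> S \<longrightarrow>
         \<delta> t S A M * pA w t S A M Sg + pM w t S A M Sg = 0"
    and w_term: "\<forall>S A M Sg. 0 < S \<and> 0 < M \<and> Sl \<le> Sg \<and> Sg \<le> Sh \<longrightarrow> w T S A M Sg = 0"
    and w_bounds: "\<forall>(t,S,A,M,Sg)\<in>DD T Sl Sh. 0 \<le> w t S A M Sg \<and> w t S A M Sg \<le> Kw"
    and w_L4: "Lp 4 T Pset (\<lambda>t (S,A,M,Sg). pSig w t S A M Sg)"
              "Lp 4 T Pset (\<lambda>t (S,A,M,Sg). S * Delta w \<gamma> t S A M Sg)"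
              "Lp 4 T Pset (\<lambda>t (S,A,M,Sg). \<beta> t S A M * pA w t S A M Sg + S\<^sup>2 * Gam w \<gamma> t S A M Sg)"
              "Lp 4 T Pset (\<lambda>t (S,A,M,Sg). S * dDelta_dSig w \<gamma> t S A M Sg)"
              "Lp 4 T Pset (\<lambda>t (S,A,M,Sg). pSig (pSig w) t S A M Sg)"
    \<comment> \<open>Assumption (A)(f)\<close>
    and U_C3: "\<forall>k<3. \<forall>y. ((deriv ^^ k) U) differentiable (at y)"
              "continuous_on UNIV ((deriv ^^ 3) U)"
    and U_incr: "\<forall>y. deriv U y > 0" and U_conc: "\<forall>y. deriv (deriv U) y < 0"
    and U_dara: "\<forall>x y. x \<le> y \<longrightarrow>
                    - deriv (deriv U) y / deriv U y \<le> - deriv (deriv U) x / deriv U x"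
  shows "\<exists>K4. (\<forall>t x. 0 \<le> K4 t x) \<and> Lp 2 T Pset K4 \<and>
     (\<forall>t S A M Sg y \<theta> \<phi> \<nu> \<sigma> \<eta> \<xi> psi.
        (t,S,A,M,Sg) \<in> DD T Sl Sh \<and>
        nul \<le> \<nu> \<and> \<nu> \<le> nuh \<and> sigl \<le> \<sigma> \<and> \<sigma> \<le> sigh \<and> etal \<le> \<eta> \<and> \<eta> \<le> etah
        \<and> 0 \<le> \<xi> \<and> \<xi> \<le> xih \<and> 0 < psi \<longrightarrow>
        H4 U V C \<gamma> w psi t S A M Sg y (\<theta>, \<phi>) (\<nu>, \<sigma>, \<eta>, \<xi>)
          \<ge> deriv (deriv U) y * K4 t (S,A,M,Sg) * psi\<^sup>2)"
proof -
  define F :: "real \<Rightarrow> real \<times> real \<times> real \<times> real \<Rightarrow> real"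
    where "F = (\<lambda>t (S, A, M, Sg). S * Delta w \<gamma> t S A M Sg)"
  define G :: "real \<Rightarrow> real \<times> real \<times> real \<times> real \<Rightarrow> real"
    where "G = (\<lambda>t (S, A, M, Sg). pSig w t S A M Sg)"
  define K4 where "K4 = (\<lambda>t x. sigh\<^sup>2 * (F t x)\<^sup>2 + (etal\<^sup>2 + etah\<^sup>2 + xih) * (G t x)\<^sup>2)"
  have "Lp 2 T Pset K4"
    unfolding K4_def F_def G_def using models P00_pos w_L4(1,2) T_pos const_bounds
    by (intro Lp_sum_of_squares[of T Pset S0 Sig0 A0]) auto
  have U'''_nonneg: "0 \<le> deriv (deriv (deriv U)) y" for y
    using U_C3(1)[rule_format, of 1 y] U_C3(1)[rule_format, of 2 y] U_incr U_dara
    by (intro deriv3_nonneg_if_antimono_ARA) (auto simp: numeral_2_eq_2 antimono_def)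
  show ?thesis
  proof (intro exI[of _ K4] conjI allI impI)
    show "0 \<le> K4 t x" for t x unfolding K4_def using const_bounds by simp
    show "Lp 2 T Pset K4" by fact
    fix t S A M Sg y \<theta> \<phi> \<nu> \<sigma> \<eta> \<xi> psi :: real
    assume H: "(t, S, A, M, Sg) \<in> DD T Sl Sh \<and> nul \<le> \<nu> \<and> \<nu> \<le> nuh \<and> sigl \<le> \<sigma> \<and> \<sigma> \<le> sigh
      \<and> etal \<le> \<eta> \<and> \<eta> \<le> etah \<and> 0 \<le> \<xi> \<and> \<xi> \<le> xih \<and> 0 < psi"
    have "qf \<eta> \<xi> (\<sigma> * (S * Delta w \<gamma> t S A M Sg), pSig w t S A M Sg)
        (\<sigma> * (S * Delta w \<gamma> t S A M Sg), pSig w t S A M Sg) \<le> 2 * K4 t (S, A, M, Sg)"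
      unfolding K4_def F_def G_def prod.case using H const_bounds by (intro qf_self_le) auto
    then show "deriv (deriv U) y * K4 t (S, A, M, Sg) * psi\<^sup>2
        \<le> H4 U V C \<gamma> w psi t S A M Sg y (\<theta>, \<phi>) (\<nu>, \<sigma>, \<eta>, \<xi>)"
      using U_conc U'''_nonneg w_bounds H by (intro H4_ge_of_qf_le) auto
  qed
qed

end
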